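(* If $D \subset \mathbb{C}$ is a Bloch domain, i.e. $\sup_{z\in D}\sup\{r>0: \{w:|w-z|<r\}\subset D\}<+\infty$, then $\mathrm{b}(D) = \mathrm{b}_{\alpha}(D) = +\infty$ for all $\alpha > -1$.
   Context: $A^p_\alpha$ ($0<p<\infty$, $\alpha>-1$) is the weighted Bergman space on $\mathbb{D}$. $\mathrm{b}_\alpha(f)=\sup(\{0\}\cup\{p>0: f\in A^p_\alpha\})$, $\mathrm{b}(f)=\sup(\{0\}\cup\{p/(\alpha+2): p>0,\alpha>-1, f\in A^p_\alpha\})$, and for a domain $D$, $\mathrm{b}(D)$, $\mathrm{b}_\alpha(D)$ are the infima of $\mathrm{b}(f)$, $\mathrm{b}_\alpha(f)$ over holomorphic $f\colon\mathbb{D}\to D$. *)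

theory Defs
  imports "HOL-Complex_Analysis.Complex_Analysis"
begin

text \<open>Weighted Bergman space A^p_alpha on the unit disc (area measure = Lebesgue
  measure on complex; normalisation constants do not affect membership).\<close>
definition bergman_space :: "real \<Rightarrow> real \<Rightarrow> (complex \<Rightarrow> complex) set" where
  "bergman_space p \<alpha> =
     {f. f holomorphic_on ball 0 1 \<and>
         (\<integral>\<^sup>+ z\<in>ball 0 1. ennreal (cmod (f z) powr p * (1 - cmod z ^ 2) powr \<alpha>) \<partial>lborel) < \<infinity>}"

definition b_alpha :: "real \<Rightarrow> (complex \<Rightarrow> complex) \<Rightarrow> ereal" where
  "b_alpha \<alpha> f = Sup ({0} \<union> {ereal p | p. p > 0 \<and> f \<in> bergman_space p \<alpha>})"

definition b_fun :: "(complex \<Rightarrow> complex) \<Rightarrow> ereal" where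
  "b_fun f = Sup ({0} \<union> {ereal (p / (\<alpha> + 2)) | p \<alpha>. p > 0 \<and> \<alpha> > -1 \<and> f \<in> bergman_space p \<alpha>})"

definition maps_into :: "complex set \<Rightarrow> (complex \<Rightarrow> complex) set" where
  "maps_into D = {f. f holomorphic_on ball 0 1 \<and> f ` ball 0 1 \<subseteq> D}"

definition b_dom :: "complex set \<Rightarrow> ereal" where
  "b_dom D = (INF f\<in>maps_into D. b_fun f)"

definition b_alpha_dom :: "real \<Rightarrow> complex set \<Rightarrow> ereal" where
  "b_alpha_dom \<alpha> D = (INF f\<in>maps_into D. b_alpha \<alpha> f)"

definition bloch_domain :: "complex set \<Rightarrow> bool" where
  "bloch_domain D \<longleftrightarrow> open D \<and> connected D \<and> D \<noteq> {} \<and>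
     (SUP z\<in>D. Sup {ereal r | r. r > 0 \<and> ball z r \<subseteq> D}) < \<infinity>"

end

theory Submission
  imports Defs
begin

text \<open>A Bloch domain \<open>D\<close> contains no disc of radius larger than some \<open>R\<close>. For holomorphic
  \<open>f\<close> from the unit disc into \<open>D\<close>, Bloch's theorem finds inside the image of the disc of radius
  \<open>1 - |z|\<close> about \<open>z\<close> a disc of radius \<open>(1 - |z|) |f'(z)| / 12\<close>, so \<open>(1 - |z|) |f'(z)| \<le> 12 R\<close>
  and \<open>f\<close> is a Bloch function. Hence \<open>|f(z)| = O((1 - |z|) powr -\<delta>)\<close> for every \<open>\<delta> > 0\<close>, and
  since \<open>(1 - |z|) powr s\<close> is integrable over the disc for \<open>s > -1\<close>, \<open>f\<close> lies in every
  \<open>A^p_\<alpha>\<close>: the suprema defining \<open>b(f)\<close> and \<open>b_\<alpha>(f)\<close> are infinite.\<close>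

text \<open>The weight \<open>1 - |z|\<close> replaces the customary \<open>1 - |z|^2\<close>; the two differ by a factor
  between 1 and 2.\<close>
definition bloch_function :: "(complex \<Rightarrow> complex) \<Rightarrow> bool" where
  "bloch_function f \<longleftrightarrow> f holomorphic_on ball 0 1 \<and>
     (\<exists>M. \<forall>z\<in>ball 0 1. (1 - norm z) * norm (deriv f z) \<le> M)"

lemma bloch_domain_inradius_bounded:
  assumes "bloch_domain D"
  obtains R where "\<And>z r. z \<in> D \<Longrightarrow> ball z r \<subseteq> D \<Longrightarrow> r \<le> R"
proof -
  define S where "S = (SUP z\<in>D. Sup {ereal r | r. r > 0 \<and> ball z r \<subseteq> D})"
  have "S < \<infinity>"
    using assms unfolding bloch_domain_def S_def by auto
  have le: "ereal r \<le> S" if "z \<in> D" "r > 0" "ball z r \<subseteq> D" for z r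
  proof -
    have "ereal r \<le> Sup {ereal r | r. r > 0 \<and> ball z r \<subseteq> D}"
      by (rule Sup_upper) (use that in auto)
    also have "\<dots> \<le> S"
      unfolding S_def by (rule SUP_upper) fact
    finally show ?thesis .
  qed
  have "r \<le> max 0 (real_of_ereal S)" if "z \<in> D" "ball z r \<subseteq> D" for z r
    using le[OF that(1) _ that(2)] \<open>S < \<infinity>\<close> by (cases S; cases "r > 0") auto
  then show ?thesis
    using that by blast
qed

lemma bloch_seminorm_le_inradius:
  assumes hol: "f holomorphic_on ball 0 1" and img: "f ` ball 0 1 \<subseteq> D"
    and R: "\<And>w r. w \<in> D \<Longrightarrow> ball w r \<subseteq> D \<Longrightarrow> r \<le> R"
    and z: "norm z < 1"
  shows "(1 - norm z) * norm (deriv f z) \<le> 12 * R"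
proof -
  define \<rho> where "\<rho> = 1 - norm z"
  have "\<rho> > 0"
    using z by (simp add: \<rho>_def)
  have sub: "ball z \<rho> \<subseteq> ball 0 1"
  proof
    fix w assume "w \<in> ball z \<rho>"
    then have "norm (w - z) < \<rho>"
      by (simp add: dist_norm norm_minus_commute)
    then show "w \<in> ball 0 1"
      using norm_triangle_sub[of w z] by (simp add: \<rho>_def)
  qed
  obtain b where b: "ball b (\<rho> * norm (deriv f z) / 12) \<subseteq> f ` ball z \<rho>"
    using Bloch[OF holomorphic_on_subset[OF hol sub] \<open>\<rho> > 0\<close> order_refl] by blast
  have "R \<ge> 0"
    using R[of "f z" 0] img z by force
  moreover have "\<rho> * norm (deriv f z) / 12 \<le> R" if "\<rho> * norm (deriv f z) / 12 > 0"
  proof -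
    have "ball b (\<rho> * norm (deriv f z) / 12) \<subseteq> D"
      using b sub img by blast
    moreover have "b \<in> D"
      using calculation that by auto
    ultimately show ?thesis
      using R by blast
  qed
  ultimately show ?thesis
    by (fastforce simp: \<rho>_def)
qed

lemma bloch_function_if_maps_into_bloch_domain:
  assumes "bloch_domain D" "f \<in> maps_into D"
  shows "bloch_function f"
proof -
  obtain R where R: "\<And>z r. z \<in> D \<Longrightarrow> ball z r \<subseteq> D \<Longrightarrow> r \<le> R"
    using bloch_domain_inradius_bounded[OF assms(1)] by blast
  have hol: "f holomorphic_on ball 0 1" and img: "f ` ball 0 1 \<subseteq> D"
    using assms(2) by (auto simp: maps_into_def)
  moreover have "(1 - norm z) * norm (deriv f z) \<le> 12 * R" if "z \<in> ball 0 1" for z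
    by (rule bloch_seminorm_le_inradius[where D = D]) (use hol img R that in auto)
  ultimately show ?thesis
    unfolding bloch_function_def by blast
qed

text \<open>Compare \<open>t \<mapsto> f (t z)\<close> on \<open>[0, 1]\<close> with \<open>\<phi> t = (M / \<delta>) (1 - t |z|) powr -\<delta>\<close>, whose
  derivative dominates \<open>|z f'(t z)|\<close>; the power replaces the logarithm of the classical bound
  \<open>|f z - f 0| \<le> M log (1 / (1 - |z|))\<close>.\<close>
lemma bloch_growth_bound:
  assumes hol: "f holomorphic_on ball 0 1"
    and bd: "\<And>z. norm z < 1 \<Longrightarrow> (1 - norm z) * norm (deriv f z) \<le> M"
    and "\<delta> > 0" and z: "norm z < 1"
  shows "norm (f z) \<le> (norm (f 0) + M / \<delta>) * (1 - norm z) powr (-\<delta>)"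
proof -
  have "M \<ge> 0"
    using bd[of 0] by (auto intro: order_trans[rotated])
  define u where "u = norm z"
  have u: "0 \<le> u" "u < 1"
    using z by (auto simp: u_def)
  define g where "g = (\<lambda>t::real. f (of_real t * z))"
  define \<phi> where "\<phi> = (\<lambda>t::real. (M / \<delta>) * (1 - t * u) powr (-\<delta>))"
  define \<phi>' where "\<phi>' = (\<lambda>t::real. M * u * (1 - t * u) powr (-\<delta> - 1))"
  have norm_tz: "norm (of_real t * z) = t * u" if "0 \<le> t" for t
    using that by (simp add: u_def norm_mult)
  have tu: "0 \<le> t * u" "t * u < 1" if "0 \<le> t" "t \<le> 1" for t
    using that u mult_left_le_one_le[of u t] by auto
  have g': "(g has_vector_derivative z * deriv f (of_real t * z)) (at t)"
    if "0 \<le> t" "t \<le> 1" for t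
  proof -
    have "(f has_field_derivative deriv f (of_real t * z)) (at (of_real t * z))"
      using hol tu[OF that] norm_tz[OF that(1)] by (auto intro: holomorphic_derivI)
    then show ?thesis
      unfolding g_def by (auto intro!: derivative_eq_intros simp: o_def
          dest: field_vector_diff_chain_at[rotated])
  qed
  have "continuous_on {0..1} g"
    unfolding g_def using tu norm_tz
    by (intro continuous_on_compose2[OF holomorphic_on_imp_continuous_on[OF hol]]
        continuous_intros) auto
  moreover have "continuous_on {0..1} \<phi>"
    unfolding \<phi>_def by (intro continuous_intros) (fastforce dest: tu(2))
  moreover have "(\<phi> has_vector_derivative \<phi>' t) (at t)" if "0 \<le> t" "t \<le> 1" for t
    unfolding \<phi>_def \<phi>'_def has_real_derivative_iff_has_vector_derivative[symmetric]
    using tu[OF that] \<open>\<delta> > 0\<close> by (auto intro!: derivative_eq_intros simp: field_simps)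
  moreover have "norm (z * deriv f (of_real t * z)) \<le> \<phi>' t" if "0 < t" "t < 1" for t
  proof -
    have pos: "0 < 1 - t * u" "1 - t * u \<le> 1"
      using tu[of t] that by auto
    have "(1 - t * u) * norm (deriv f (of_real t * z)) \<le> M"
      using bd[of "of_real t * z"] norm_tz[of t] tu[of t] that by auto
    then have "norm (deriv f (of_real t * z)) \<le> M * (1 - t * u) powr (-1)"
      using pos by (simp add: powr_neg_one field_simps)
    also have "\<dots> \<le> M * (1 - t * u) powr (-\<delta> - 1)"
      using pos \<open>\<delta> > 0\<close> \<open>M \<ge> 0\<close> by (intro mult_left_mono powr_mono') auto
    finally have "u * norm (deriv f (of_real t * z)) \<le> u * (M * (1 - t * u) powr (-\<delta> - 1))"
      using u(1) by (rule mult_left_mono)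
    then show ?thesis
      by (simp add: \<phi>'_def norm_mult u_def mult_ac)
  qed
  ultimately have "norm (g 1 - g 0) \<le> \<phi> 1 - \<phi> 0"
    using g' by (intro differentiable_bound_general[OF zero_less_one,
        where f' = "\<lambda>t. z * deriv f (of_real t * z)" and \<phi>' = \<phi>']) auto
  also have "\<dots> \<le> (M / \<delta>) * (1 - u) powr (-\<delta>)"
    using \<open>M \<ge> 0\<close> \<open>\<delta> > 0\<close> by (simp add: \<phi>_def)
  finally have "norm (f z - f 0) \<le> (M / \<delta>) * (1 - u) powr (-\<delta>)"
    by (simp add: g_def)
  moreover have "norm (f 0) \<le> norm (f 0) * (1 - u) powr (-\<delta>)"
    using u \<open>\<delta> > 0\<close> powr_mono'[of "-\<delta>" 0 "1 - u"] by (simp add: mult_le_cancel_left1)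
  ultimately show ?thesis
    using norm_triangle_sub[of "f z" "f 0"] by (simp add: u_def distrib_right)
qed

lemma ex_half_power_ivl:
  fixes t :: real
  assumes "0 < t" "t \<le> 1"
  shows "\<exists>n. (1/2)^Suc n < t \<and> t \<le> (1/2)^n"
proof -
  define k where "k = (LEAST m. (1/2::real)^m < t)"
  have "\<exists>m. (1/2::real)^m < t"
    using real_arch_pow_inv[of t "1/2"] assms by auto
  then have "(1/2)^k < t"
    unfolding k_def by (rule LeastI_ex)
  moreover from this obtain n where "k = Suc n"
    using assms by (cases k) auto
  moreover have "\<not> (1/2)^n < t"
    unfolding k_def by (rule not_less_Least) (simp add: \<open>k = Suc n\<close> k_def[symmetric])
  ultimately show ?thesis
    by (auto simp: not_less)
qed

definition dyadic_annulus :: "nat \<Rightarrow> complex set" where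
  "dyadic_annulus n = ball 0 (1 - (1/2)^Suc n) - ball 0 (1 - (1/2)^n)"

lemma mem_dyadic_annulus_iff:
  "z \<in> dyadic_annulus n \<longleftrightarrow> (1/2)^Suc n < 1 - norm z \<and> 1 - norm z \<le> (1/2)^n"
  by (auto simp: dyadic_annulus_def)

lemma emeasure_dyadic_annulus_le: "emeasure lborel (dyadic_annulus n) \<le> ennreal (pi * (1/2)^n)"
proof -
  define r where "r = 1 - (1/2::real)^n"
  define r' where "r' = 1 - (1/2::real)^Suc n"
  have r: "0 \<le> r" "r \<le> r'" "r' \<le> 1"
    by (auto simp: r_def r'_def power_le_one)
  have vol: "emeasure lborel (ball (0::complex) \<rho>) = ennreal (pi * \<rho>^2)" if "0 \<le> \<rho>" for \<rho>
    using that by (simp add: emeasure_ball unit_ball_vol_2)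
  have "emeasure lborel (dyadic_annulus n)
      = emeasure lborel (ball (0::complex) r') - emeasure lborel (ball (0::complex) r)"
    unfolding dyadic_annulus_def r_def[symmetric] r'_def[symmetric]
    by (rule emeasure_Diff) (use r in \<open>auto simp: vol\<close>)
  also have "\<dots> = ennreal (pi * ((r' - r) * (r' + r)))"
    using r by (simp add: vol ennreal_minus power2_eq_square algebra_simps)
  also have "\<dots> \<le> ennreal (pi * ((1/2)^Suc n * 2))"
    using r by (intro ennreal_leI mult_left_mono mult_mono) (auto simp: r_def r'_def)
  finally show ?thesis
    by simp
qed

lemma one_minus_norm_powr_le_dyadic_sum:
  fixes \<beta> :: real
  assumes "0 \<le> \<beta>" "norm z < 1"
  shows "ennreal ((1 - norm z) powr -\<beta>)
           \<le> (\<Sum>n. ennreal ((2 powr \<beta>) ^ Suc n) * indicator (dyadic_annulus n) z)"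
proof -
  have pow: "((1/2)^k) powr -\<beta> = (2 powr \<beta>) ^ k" for k :: nat
    by (simp add: powr_minus_divide power_one_over powr_divide powr_realpow[symmetric] powr_powr
        mult.commute)
  obtain n where n: "(1/2)^Suc n < 1 - norm z" "1 - norm z \<le> (1/2)^n"
    using ex_half_power_ivl[of "1 - norm z"] assms by auto
  have "(1 - norm z) powr -\<beta> \<le> ((1/2)^Suc n) powr -\<beta>"
    using n assms by (intro powr_mono2') auto
  also have "\<dots> = (2 powr \<beta>) ^ Suc n"
    by (fact pow)
  finally have "ennreal ((1 - norm z) powr -\<beta>)
      \<le> (\<Sum>j\<in>{n}. ennreal ((2 powr \<beta>) ^ Suc j) * indicator (dyadic_annulus j) z)"
    using n by (simp add: mem_dyadic_annulus_iff ennreal_leI)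
  also have "\<dots> \<le> (\<Sum>j. ennreal ((2 powr \<beta>) ^ Suc j) * indicator (dyadic_annulus j) z)"
    by (rule sum_le_suminf) auto
  finally show ?thesis .
qed

text \<open>On the \<open>n\<close>-th dyadic annulus the integrand is at most \<open>2 powr (\<beta> (n + 1))\<close> with
  \<open>\<beta> = max (-s) 0 < 1\<close>, and the area is at most \<open>\<pi> 2^-n\<close>: the resulting series is geometric.\<close>
lemma nn_integral_one_minus_norm_powr_finite:
  fixes s :: real
  assumes "s > -1"
  shows "(\<integral>\<^sup>+ z\<in>ball (0::complex) 1. ennreal ((1 - norm z) powr s) \<partial>lborel) < \<infinity>"
proof -
  define \<beta> where "\<beta> = - min s 0"
  have \<beta>: "0 \<le> \<beta>" "\<beta> < 1"
    using assms by (auto simp: \<beta>_def)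
  define c where "c n = ennreal ((2 powr \<beta>) ^ Suc n)" for n
  have sets_annulus [measurable]: "dyadic_annulus n \<in> sets lborel" for n
    by (simp add: dyadic_annulus_def)
  have "ennreal ((1 - norm z) powr s) * indicator (ball 0 1) z
      \<le> (\<Sum>n. c n * indicator (dyadic_annulus n) z)" for z
  proof (cases "norm z < 1")
    case True
    have "(1 - norm z) powr s \<le> (1 - norm z) powr -\<beta>"
      using True by (intro powr_mono') (auto simp: \<beta>_def)
    then have "ennreal ((1 - norm z) powr s) \<le> ennreal ((1 - norm z) powr -\<beta>)"
      by (rule ennreal_leI)
    also have "\<dots> \<le> (\<Sum>n. c n * indicator (dyadic_annulus n) z)"
      unfolding c_def by (rule one_minus_norm_powr_le_dyadic_sum[OF \<beta>(1) True])
    finally show ?thesis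
      using True by simp
  qed simp
  then have "(\<integral>\<^sup>+ z\<in>ball (0::complex) 1. ennreal ((1 - norm z) powr s) \<partial>lborel)
      \<le> (\<integral>\<^sup>+ z. (\<Sum>n. c n * indicator (dyadic_annulus n) z) \<partial>lborel)"
    by (rule nn_integral_mono)
  also have "\<dots> = (\<Sum>n. c n * emeasure lborel (dyadic_annulus n))"
    using nn_integral_cmult_indicator[OF sets_annulus] by (simp add: nn_integral_suminf)
  also have "\<dots> \<le> (\<Sum>n. ennreal (2 powr \<beta> * pi * (2 powr \<beta> / 2) ^ n))"
  proof (intro suminf_le)
    fix n
    have "c n * emeasure lborel (dyadic_annulus n) \<le> c n * ennreal (pi * (1/2)^n)"
      by (intro mult_left_mono emeasure_dyadic_annulus_le) simp
    also have "\<dots> = ennreal (2 powr \<beta> * pi * (2 powr \<beta> / 2) ^ n)"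
      by (simp add: c_def ennreal_mult''[symmetric] power_divide)
    finally show "c n * emeasure lborel (dyadic_annulus n) \<le> \<dots>" .
  qed auto
  also have "\<dots> < \<infinity>"
  proof -
    have "2 powr \<beta> < 2 powr 1"
      using \<beta> by (intro powr_less_mono) auto
    then have "summable (\<lambda>n. 2 powr \<beta> * pi * (2 powr \<beta> / 2) ^ n)"
      by (intro summable_mult summable_geometric) simp
    then show ?thesis
      by (simp add: suminf_ennreal2)
  qed
  finally show ?thesis .
qed

lemma one_minus_square_powr_le:
  fixes r \<alpha> :: real
  assumes "0 \<le> r" "r < 1"
  shows "(1 - r^2) powr \<alpha> \<le> (1 - r) powr min \<alpha> 0"
proof (cases "\<alpha> \<ge> 0")
  case True
  have "r^2 \<le> 1"
    using assms by (simp add: power_le_one)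
  then show ?thesis
    using True assms by (simp add: powr_le1)
next
  case False
  have "(1 - r^2) powr \<alpha> = (1 - r) powr \<alpha> * (1 + r) powr \<alpha>"
    using assms by (simp add: powr_mult[symmetric] power2_eq_square algebra_simps)
  also have "\<dots> \<le> (1 - r) powr \<alpha>"
    using False assms powr_mono2'[of \<alpha> 1 "1 + r"] by (simp add: mult_left_le)
  finally show ?thesis
    using False by simp
qed

lemma bloch_function_in_bergman_space:
  assumes "bloch_function f" "p > 0" "\<alpha> > -1"
  shows "f \<in> bergman_space p \<alpha>"
proof -
  obtain M where hol: "f holomorphic_on ball 0 1"
    and M: "\<And>z. norm z < 1 \<Longrightarrow> (1 - norm z) * norm (deriv f z) \<le> M"
    using assms(1) unfolding bloch_function_def by force
  define a where "a = min \<alpha> 0"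
  define \<delta> where "\<delta> = (1 + a) / (2 * p)"
  define s where "s = (a - 1) / 2"
  define K where "K = norm (f 0) + M / \<delta>"
  have "\<delta> > 0" "s > -1"
    using assms by (auto simp: \<delta>_def s_def a_def)
  have exponent: "a - \<delta> * p = s"
    using \<open>p > 0\<close> by (simp add: \<delta>_def s_def field_simps)
  have bound: "norm (f z) powr p * (1 - norm z ^ 2) powr \<alpha> \<le> K powr p * (1 - norm z) powr s"
    if z: "norm z < 1" for z
  proof -
    have f_le: "norm (f z) \<le> K * (1 - norm z) powr (-\<delta>)"
      unfolding K_def by (rule bloch_growth_bound[OF hol M \<open>\<delta> > 0\<close> z])
    then have "K \<ge> 0"
      using z by (smt (verit) norm_ge_zero powr_gt_zero zero_le_mult_iff)
    have "norm (f z) powr p \<le> (K * (1 - norm z) powr (-\<delta>)) powr p"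
      using f_le \<open>p > 0\<close> by (intro powr_mono2) auto
    also have "\<dots> = K powr p * (1 - norm z) powr (-\<delta> * p)"
      using \<open>K \<ge> 0\<close> by (simp add: powr_mult powr_powr)
    finally have "norm (f z) powr p * (1 - norm z ^ 2) powr \<alpha>
        \<le> K powr p * (1 - norm z) powr (-\<delta> * p) * (1 - norm z) powr a"
      using one_minus_square_powr_le[of "norm z" \<alpha>] z unfolding a_def
      by (intro mult_mono) auto
    also have "\<dots> = K powr p * (1 - norm z) powr s"
      by (simp add: mult.assoc powr_add[symmetric] exponent)
    finally show ?thesis .
  qed
  have "(\<integral>\<^sup>+ z\<in>ball 0 1. ennreal (norm (f z) powr p * (1 - norm z ^ 2) powr \<alpha>) \<partial>lborel)
      \<le> (\<integral>\<^sup>+ z. ennreal (K powr p) *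
            (ennreal ((1 - norm z) powr s) * indicator (ball (0::complex) 1) z) \<partial>lborel)"
    using bound
    by (intro nn_integral_mono) (auto simp: ennreal_mult''[symmetric] ennreal_leI indicator_def)
  also have "\<dots> = ennreal (K powr p) *
      (\<integral>\<^sup>+ z\<in>ball (0::complex) 1. ennreal ((1 - norm z) powr s) \<partial>lborel)"
  proof (rule nn_integral_cmult)
    have [measurable]: "ball (0::complex) 1 \<in> sets borel"
      by simp
    show "(\<lambda>z. ennreal ((1 - norm z) powr s) * indicator (ball (0::complex) 1) z)
        \<in> borel_measurable lborel"
      by measurable
  qed
  also have "\<dots> < \<infinity>"
    using nn_integral_one_minus_norm_powr_finite[OF \<open>s > -1\<close>]
    by (simp add: ennreal_mult_less_top)
  finally show ?thesis
    using hol unfolding bergman_space_def by simp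
qed

lemma b_alpha_eq_infinity:
  assumes "\<And>p. p > 0 \<Longrightarrow> f \<in> bergman_space p \<alpha>"
  shows "b_alpha \<alpha> f = \<infinity>"
  unfolding b_alpha_def
proof (rule ereal_top)
  fix B :: real
  have "ereal (\<bar>B\<bar> + 1) \<in> {ereal p | p. p > 0 \<and> f \<in> bergman_space p \<alpha>}"
    using assms by auto
  then show "ereal B \<le> Sup ({0} \<union> {ereal p | p. p > 0 \<and> f \<in> bergman_space p \<alpha>})"
    by (rule Sup_upper2[OF UnI2]) simp
qed

lemma b_fun_eq_infinity:
  assumes "\<And>p. p > 0 \<Longrightarrow> f \<in> bergman_space p \<alpha>" and "\<alpha> > -1"
  shows "b_fun f = \<infinity>"
  unfolding b_fun_def
proof (rule ereal_top)
  fix B :: real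
  define p where "p = (\<bar>B\<bar> + 1) * (\<alpha> + 2)"
  have "ereal (p / (\<alpha> + 2))
      \<in> {ereal (p / (\<alpha> + 2)) | p \<alpha>. p > 0 \<and> \<alpha> > -1 \<and> f \<in> bergman_space p \<alpha>}"
    using assms by (intro CollectI exI[of _ p] exI[of _ \<alpha>]) (auto simp: p_def)
  moreover have "ereal B \<le> ereal (p / (\<alpha> + 2))"
    using assms(2) by (simp add: p_def)
  ultimately show "ereal B \<le> Sup ({0} \<union>
      {ereal (p / (\<alpha> + 2)) | p \<alpha>. p > 0 \<and> \<alpha> > -1 \<and> f \<in> bergman_space p \<alpha>})"
    by (intro Sup_upper2[OF UnI2])
qed

theorem corollary2p17:
  assumes "bloch_domain D"
  shows "b_dom D = \<infinity> \<and> (\<forall>\<alpha>>-1. b_alpha_dom \<alpha> D = \<infinity>)"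
proof -
  have bergman: "f \<in> bergman_space p \<alpha>" if "f \<in> maps_into D" "p > 0" "\<alpha> > -1" for f p \<alpha>
    using bloch_function_in_bergman_space bloch_function_if_maps_into_bloch_domain[OF assms] that
    by blast
  have "b_fun f = \<infinity>" if "f \<in> maps_into D" for f
    using b_fun_eq_infinity[of f 0] bergman[OF that] by simp
  moreover have "b_alpha \<alpha> f = \<infinity>" if "f \<in> maps_into D" "\<alpha> > -1" for f \<alpha>
    using b_alpha_eq_infinity bergman that by blast
  ultimately show ?thesis
    unfolding b_dom_def b_alpha_dom_def by (simp add: top_ereal_def[symmetric])
qed

end
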